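(* In the setting of the context, the inclusion maps $\Gamma(F_{xz},R_{xz})\hookrightarrow\Gamma(G_1,S_1)$ and $\Gamma(F_{yz},R_{yz})\hookrightarrow\Gamma(G_1,S_1)$ of Cayley graphs are isometric embeddings. Moreover, for all $g_0\in F_{xz}$, $g_1\in F_{yz}$ and $h\in H$, we have $|g_0h|_{S_1}\ge|g_0|_{S_1}$ and $|g_1h|_{S_1}\ge|g_1|_{S_1}$.
   Context: $H$ is a finitely presented group with finite generating set $T$, containing a free subgroup $F$ of rank $p$ with free basis $R=\{d_1,\dots,d_p\}\subset T$ (standing assumption: $\mathrm{Dist}_F^H$ admits an exponentially bounded sequence of palindromic certificates in $F$). $F_x,F_y,F_z$ are free of rank $p$ with bases $R_x=\{x_i\}$, $R_y=\{y_i\}$, $R_z=\{z_i\}$. $G_1=[H\ast_{\langle d_i=x_iy_i^{-1}\rangle}(F_x\times F_y\times F_z)]\times\langle s_1\rangle$, the amalgamation identifying $d_i$ with $x_iy_i^{-1}$. Set $a_i=x_iz_i$, $b_i=y_iz_i$, $R_{xz}=\{a_i\}$, $R_{yz}=\{b_i\}$, $F_{xz}=\langle R_{xz}\rangle$, $F_{yz}=\langle R_{yz}\rangle$ (free of rank $p$), and $S_1=T\cup R_x\cup R_y\cup R_z\cup R_{xz}\cup R_{yz}\cup\{s_1\}$. $|g|_S$ denotes word length with respect to $S$. *)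

theory Defs
  imports "HOL-Algebra.Algebra"
begin

text \<open>A word over a generating set X is a list of pairs (x, b); b = True stands for x,
  b = False for its inverse. Free reduction is done by a stack-based cancellation.\<close>

definition free_step :: "'a \<times> bool \<Rightarrow> ('a \<times> bool) list \<Rightarrow> ('a \<times> bool) list" where
  "free_step x acc = (case acc of [] \<Rightarrow> [x]
     | y # ys \<Rightarrow> (if fst y = fst x \<and> snd y \<noteq> snd x then ys else x # acc))"

definition free_reduce :: "('a \<times> bool) list \<Rightarrow> ('a \<times> bool) list" where
  "free_reduce ws = foldr free_step ws []"

definition free_group :: "'a set \<Rightarrow> ('a \<times> bool) list monoid" where
  "free_group Xs = \<lparr>carrier = {w. fst ` set w \<subseteq> Xs \<and> free_reduce w = w},
                   monoid.mult = (\<lambda>u v. free_reduce (u @ v)), one = []\<rparr>"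

definition free_gen :: "'a \<Rightarrow> ('a \<times> bool) list" where
  "free_gen x = [(x, True)]"

definition free_eval :: "('g, 'c) monoid_scheme \<Rightarrow> ('a \<Rightarrow> 'g) \<Rightarrow> ('a \<times> bool) list \<Rightarrow> 'g" where
  "free_eval G f w = foldr (\<lambda>(x, b) acc. (if b then f x else inv\<^bsub>G\<^esub> (f x)) \<otimes>\<^bsub>G\<^esub> acc) w \<one>\<^bsub>G\<^esub>"

definition normal_closure :: "('g, 'c) monoid_scheme \<Rightarrow> 'g set \<Rightarrow> 'g set" where
  "normal_closure G R = generate G (\<Union>g\<in>carrier G. (\<lambda>r. g \<otimes>\<^bsub>G\<^esub> r \<otimes>\<^bsub>G\<^esub> inv\<^bsub>G\<^esub> g) ` R)"

definition finitely_presented_by :: "('g, 'c) monoid_scheme \<Rightarrow> 'g set \<Rightarrow> bool" where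
  "finitely_presented_by H T \<longleftrightarrow> group H \<and> finite T \<and> T \<subseteq> carrier H \<and>
     generate H T = carrier H \<and>
     (\<exists>Rel. finite Rel \<and> Rel \<subseteq> carrier (free_group T) \<and>
        {w \<in> carrier (free_group T). free_eval H id w = \<one>\<^bsub>H\<^esub>}
          = normal_closure (free_group T) Rel)"

definition free_basis :: "('g, 'c) monoid_scheme \<Rightarrow> ('i \<Rightarrow> 'g) \<Rightarrow> 'i set \<Rightarrow> bool" where
  "free_basis H f I \<longleftrightarrow> f ` I \<subseteq> carrier H \<and> inj_on (free_eval H f) (carrier (free_group I))"

text \<open>Amalgamated free product of A and B, identifying phi i with psi i for i in I
  (and hence the subgroups they generate), given by the standard presentation:
  generators = elements of A and B, relators = multiplication tables of A and B and the
  identifications.\<close>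

definition amalg_rels ::
  "('a, 'c) monoid_scheme \<Rightarrow> ('b, 'd) monoid_scheme \<Rightarrow> ('i \<Rightarrow> 'a) \<Rightarrow> ('i \<Rightarrow> 'b) \<Rightarrow> 'i set
     \<Rightarrow> (('a + 'b) \<times> bool) list set" where
  "amalg_rels A B phi psi I =
     {free_reduce [(Inl a, True), (Inl a', True), (Inl (a \<otimes>\<^bsub>A\<^esub> a'), False)] | a a'.
        a \<in> carrier A \<and> a' \<in> carrier A}
   \<union> {free_reduce [(Inr b, True), (Inr b', True), (Inr (b \<otimes>\<^bsub>B\<^esub> b'), False)] | b b'.
        b \<in> carrier B \<and> b' \<in> carrier B}
   \<union> {free_reduce [(Inl (phi i), True), (Inr (psi i), False)] | i. i \<in> I}"

definition amalg_free ::
  "('a, 'c) monoid_scheme \<Rightarrow> ('b, 'd) monoid_scheme \<Rightarrow> (('a + 'b) \<times> bool) list monoid" where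
  "amalg_free A B = free_group (carrier A <+> carrier B)"

definition amalg_N ::
  "('a, 'c) monoid_scheme \<Rightarrow> ('b, 'd) monoid_scheme \<Rightarrow> ('i \<Rightarrow> 'a) \<Rightarrow> ('i \<Rightarrow> 'b) \<Rightarrow> 'i set
     \<Rightarrow> (('a + 'b) \<times> bool) list set" where
  "amalg_N A B phi psi I = normal_closure (amalg_free A B) (amalg_rels A B phi psi I)"

definition amalgam ::
  "('a, 'c) monoid_scheme \<Rightarrow> ('b, 'd) monoid_scheme \<Rightarrow> ('i \<Rightarrow> 'a) \<Rightarrow> ('i \<Rightarrow> 'b) \<Rightarrow> 'i set
     \<Rightarrow> (('a + 'b) \<times> bool) list set monoid" where
  "amalgam A B phi psi I = amalg_free A B Mod amalg_N A B phi psi I"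

definition amalg_inl where
  "amalg_inl A B phi psi I a = amalg_N A B phi psi I #>\<^bsub>amalg_free A B\<^esub> free_gen (Inl a)"

definition amalg_inr where
  "amalg_inr A B phi psi I b = amalg_N A B phi psi I #>\<^bsub>amalg_free A B\<^esub> free_gen (Inr b)"

type_synonym fw = "(nat \<times> bool) list"

definition Pxyz :: "nat \<Rightarrow> (fw \<times> fw \<times> fw) monoid" where
  "Pxyz p = free_group {..<p} \<times>\<times> free_group {..<p} \<times>\<times> free_group {..<p}"

definition xP :: "nat \<Rightarrow> fw \<times> fw \<times> fw" where "xP i = (free_gen i, [], [])"
definition yP :: "nat \<Rightarrow> fw \<times> fw \<times> fw" where "yP i = ([], free_gen i, [])"
definition zP :: "nat \<Rightarrow> fw \<times> fw \<times> fw" where "zP i = ([], [], free_gen i)"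

definition Amal1 where
  "Amal1 H p d = amalgam H (Pxyz p) d (\<lambda>i. xP i \<otimes>\<^bsub>Pxyz p\<^esub> inv\<^bsub>Pxyz p\<^esub> yP i) {..<p}"

definition G1 where
  "G1 H p d = Amal1 H p d \<times>\<times> integer_group"

definition embH where
  "embH H p d h = (amalg_inl H (Pxyz p) d (\<lambda>i. xP i \<otimes>\<^bsub>Pxyz p\<^esub> inv\<^bsub>Pxyz p\<^esub> yP i) {..<p} h, 0::int)"

definition embP where
  "embP H p d q = (amalg_inr H (Pxyz p) d (\<lambda>i. xP i \<otimes>\<^bsub>Pxyz p\<^esub> inv\<^bsub>Pxyz p\<^esub> yP i) {..<p} q, 0::int)"

definition gx where "gx H p d i = embP H p d (xP i)"
definition gy where "gy H p d i = embP H p d (yP i)"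
definition gz where "gz H p d i = embP H p d (zP i)"
definition gs1 where "gs1 H p d = (\<one>\<^bsub>Amal1 H p d\<^esub>, 1::int)"

definition ga where "ga H p d i = gx H p d i \<otimes>\<^bsub>G1 H p d\<^esub> gz H p d i"
definition gb where "gb H p d i = gy H p d i \<otimes>\<^bsub>G1 H p d\<^esub> gz H p d i"

definition Rxz where "Rxz H p d = ga H p d ` {..<p}"
definition Ryz where "Ryz H p d = gb H p d ` {..<p}"
definition Fxz where "Fxz H p d = generate (G1 H p d) (Rxz H p d)"
definition Fyz where "Fyz H p d = generate (G1 H p d) (Ryz H p d)"

definition S1 where
  "S1 H T p d = embH H p d ` T \<union> gx H p d ` {..<p} \<union> gy H p d ` {..<p} \<union> gz H p d ` {..<p}
     \<union> Rxz H p d \<union> Ryz H p d \<union> {gs1 H p d}"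

definition word_length :: "('g, 'c) monoid_scheme \<Rightarrow> 'g set \<Rightarrow> 'g \<Rightarrow> nat" where
  "word_length G S g = (LEAST n. \<exists>ws. length ws = n \<and> set ws \<subseteq> S \<union> m_inv G ` S \<and>
                                   foldr (\<otimes>\<^bsub>G\<^esub>) ws \<one>\<^bsub>G\<^esub> = g)"

definition cayley_dist :: "('g, 'c) monoid_scheme \<Rightarrow> 'g set \<Rightarrow> 'g \<Rightarrow> 'g \<Rightarrow> nat" where
  "cayley_dist G S g h = word_length G S (inv\<^bsub>G\<^esub> g \<otimes>\<^bsub>G\<^esub> h)"

end

theory Submission
  imports Defs
begin

(* Killing H, F_x, F_y and s_1 defines a homomorphism phi from G_1 onto the free group F_z;
   it respects the amalgamation because x_i y_i^-1 has trivial F_z-component. Every generator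
   in S_1 is sent to a word of length at most one, so |g|_S1 >= |phi g| for every g, while
   a_i = x_i z_i and b_i = y_i z_i are both sent to z_i. On F_xz, phi therefore inverts the
   evaluation of reduced words in the a_i, which gives |g|_Rxz = |phi g| <= |g|_S1 <= |g|_Rxz.
   Since phi also kills H, |g_0 h|_S1 >= |phi (g_0 h)| = |phi g_0| = |g_0|_S1. *)

section \<open>Free reduction\<close>

definition inv_letter :: "'a \<times> bool \<Rightarrow> 'a \<times> bool" where
  "inv_letter x = (fst x, \<not> snd x)"

fun reduced :: "('a \<times> bool) list \<Rightarrow> bool" where
  "reduced (x # y # ys) \<longleftrightarrow> y \<noteq> inv_letter x \<and> reduced (y # ys)"
| "reduced _ \<longleftrightarrow> True"

lemma inv_letter_inv_letter [simp]: "inv_letter (inv_letter x) = x"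
  by (simp add: inv_letter_def)

lemma fst_inv_letter [simp]: "fst (inv_letter x) = fst x"
  by (simp add: inv_letter_def)

lemma reduced_ConsD: "reduced (x # w) \<Longrightarrow> reduced w"
  by (cases w) auto

lemma free_step_Nil [simp]: "free_step x [] = [x]"
  by (simp add: free_step_def)

lemma free_step_Cons: "free_step x (y # ys) = (if y = inv_letter x then ys else x # y # ys)"
  by (cases x; cases y) (auto simp: free_step_def inv_letter_def)

lemma reduced_free_step: "reduced w \<Longrightarrow> reduced (free_step x w)"
  by (cases w) (auto simp: free_step_Cons dest: reduced_ConsD)

lemma reduced_foldr_free_step: "reduced w \<Longrightarrow> reduced (foldr free_step u w)"
  by (induction u) (auto intro: reduced_free_step)

lemma reduced_free_reduce: "reduced (free_reduce w)"
  unfolding free_reduce_def by (rule reduced_foldr_free_step) simp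

lemma free_step_reduced: "reduced (x # w) \<Longrightarrow> free_step x w = x # w"
  by (cases w) (auto simp: free_step_Cons)

lemma free_reduce_reduced: "reduced w \<Longrightarrow> free_reduce w = w"
proof (induction w)
  case (Cons x w)
  then show ?case
    using free_step_reduced[OF Cons.prems] reduced_ConsD[OF Cons.prems] by (simp add: free_reduce_def)
qed (simp add: free_reduce_def)

lemma free_reduce_idem [simp]: "free_reduce (free_reduce w) = free_reduce w"
  by (rule free_reduce_reduced[OF reduced_free_reduce])

lemma free_step_cancel: "reduced w \<Longrightarrow> free_step x (free_step (inv_letter x) w) = w"
  by (cases w) (auto simp: free_step_Cons free_step_reduced)

lemma foldr_free_step_free_step:
  assumes "reduced w"
  shows "foldr free_step (free_step x u) w = free_step x (foldr free_step u w)"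
proof (cases u)
  case (Cons y ys)
  with free_step_cancel[OF reduced_foldr_free_step[OF assms], of x ys]
  show ?thesis by (auto simp: free_step_Cons)
qed simp

lemma foldr_free_step_free_reduce:
  "reduced w \<Longrightarrow> foldr free_step (free_reduce u) w = foldr free_step u w"
  by (induction u) (simp_all add: free_reduce_def foldr_free_step_free_step)

lemma free_reduce_append: "free_reduce (u @ v) = foldr free_step u (free_reduce v)"
  by (simp add: free_reduce_def)

lemma free_reduce_append_free_reduce_left [simp]:
  "free_reduce (free_reduce u @ v) = free_reduce (u @ v)"
  by (simp add: free_reduce_append foldr_free_step_free_reduce reduced_free_reduce)

lemma free_reduce_append_free_reduce_right [simp]:
  "free_reduce (u @ free_reduce v) = free_reduce (u @ v)"
  by (simp add: free_reduce_append)

lemma letters_free_step: "fst ` set (free_step x w) \<subseteq> insert (fst x) (fst ` set w)"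
  by (cases w) (auto simp: free_step_Cons)

lemma letters_foldr_free_step: "fst ` set (foldr free_step u w) \<subseteq> fst ` set u \<union> fst ` set w"
proof (induction u)
  case (Cons x u)
  have "fst ` set (foldr free_step (x # u) w) \<subseteq> insert (fst x) (fst ` set (foldr free_step u w))"
    using letters_free_step by simp
  with Cons.IH show ?case by (simp only: list.set image_insert) blast
qed simp

lemma letters_free_reduce: "fst ` set (free_reduce w) \<subseteq> fst ` set w"
  using letters_foldr_free_step[of w "[]"] by (simp add: free_reduce_def)

lemma length_free_step: "length (free_step x w) \<le> Suc (length w)"
  by (cases w) (auto simp: free_step_Cons)

lemma length_free_reduce: "length (free_reduce w) \<le> length w"
proof -
  have "length (foldr free_step u []) \<le> length u" for u :: "('a \<times> bool) list"
    by (induction u) (auto intro: le_trans[OF length_free_step])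
  then show ?thesis by (simp add: free_reduce_def)
qed

lemma free_reduce_inverse: "free_reduce (rev (map inv_letter w) @ w) = []"
proof -
  have "foldr free_step (rev (map inv_letter w)) (foldr free_step w v) = v" if "reduced v" for v
    using that
  proof (induction w arbitrary: v)
    case (Cons x w)
    then show ?case
      using free_step_cancel[OF reduced_foldr_free_step[OF Cons.prems], of "inv_letter x" w] by simp
  qed simp
  then show ?thesis by (simp add: free_reduce_def)
qed

section \<open>Free groups and evaluation of words\<close>

lemma free_reduce_eq_self_iff: "free_reduce w = w \<longleftrightarrow> reduced w"
  by (metis free_reduce_reduced reduced_free_reduce)

lemma carrier_free_group: "carrier (free_group Xs) = {w. fst ` set w \<subseteq> Xs \<and> reduced w}"
  by (simp add: free_group_def free_reduce_eq_self_iff)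

lemma mult_free_group: "u \<otimes>\<^bsub>free_group Xs\<^esub> v = free_reduce (u @ v)"
  by (simp add: free_group_def)

lemma one_free_group: "\<one>\<^bsub>free_group Xs\<^esub> = []"
  by (simp add: free_group_def)

lemma free_reduce_in_free_group: "fst ` set w \<subseteq> Xs \<Longrightarrow> free_reduce w \<in> carrier (free_group Xs)"
  using letters_free_reduce[of w] reduced_free_reduce[of w] by (auto simp: carrier_free_group)

lemma free_gen_in_free_group: "x \<in> Xs \<Longrightarrow> free_gen x \<in> carrier (free_group Xs)"
  by (simp add: carrier_free_group free_gen_def)

lemma group_free_group: "group (free_group Xs)"
proof (rule groupI)
  fix u v assume "u \<in> carrier (free_group Xs)" "v \<in> carrier (free_group Xs)"
  then have "fst ` set (u @ v) \<subseteq> Xs" by (auto simp: carrier_free_group)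
  then show "u \<otimes>\<^bsub>free_group Xs\<^esub> v \<in> carrier (free_group Xs)"
    by (simp add: mult_free_group free_reduce_in_free_group)
next
  fix u v w
  show "u \<otimes>\<^bsub>free_group Xs\<^esub> v \<otimes>\<^bsub>free_group Xs\<^esub> w
      = u \<otimes>\<^bsub>free_group Xs\<^esub> (v \<otimes>\<^bsub>free_group Xs\<^esub> w)"
    by (simp add: mult_free_group)
next
  fix u assume "u \<in> carrier (free_group Xs)"
  then have "free_reduce (rev (map inv_letter u)) \<in> carrier (free_group Xs)"
    by (intro free_reduce_in_free_group) (auto simp: carrier_free_group)
  moreover have "free_reduce (rev (map inv_letter u)) \<otimes>\<^bsub>free_group Xs\<^esub> u = \<one>\<^bsub>free_group Xs\<^esub>"
    by (simp add: mult_free_group one_free_group free_reduce_inverse)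
  ultimately show "\<exists>v\<in>carrier (free_group Xs). v \<otimes>\<^bsub>free_group Xs\<^esub> u = \<one>\<^bsub>free_group Xs\<^esub>" ..
qed (auto simp: carrier_free_group mult_free_group one_free_group free_reduce_reduced)

lemma inv_free_group:
  assumes "u \<in> carrier (free_group Xs)"
  shows "inv\<^bsub>free_group Xs\<^esub> u = free_reduce (rev (map inv_letter u))"
proof (rule group.inv_equality[OF group_free_group])
  show "free_reduce (rev (map inv_letter u)) \<otimes>\<^bsub>free_group Xs\<^esub> u = \<one>\<^bsub>free_group Xs\<^esub>"
    by (simp add: mult_free_group one_free_group free_reduce_inverse)
  show "free_reduce (rev (map inv_letter u)) \<in> carrier (free_group Xs)"
    using assms by (intro free_reduce_in_free_group) (auto simp: carrier_free_group)
qed (rule assms)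

lemma length_inv_free_group:
  "u \<in> carrier (free_group Xs) \<Longrightarrow> length (inv\<^bsub>free_group Xs\<^esub> u) \<le> length u"
  using length_free_reduce[of "rev (map inv_letter u)"] by (simp add: inv_free_group)

lemma length_mult_free_group: "length (u \<otimes>\<^bsub>free_group Xs\<^esub> v) \<le> length u + length v"
  using length_free_reduce[of "u @ v"] by (simp add: mult_free_group)

lemma inv_free_gen: "x \<in> Xs \<Longrightarrow> inv\<^bsub>free_group Xs\<^esub> (free_gen x) = [(x, False)]"
  by (simp add: inv_free_group free_gen_in_free_group)
    (simp add: free_gen_def free_reduce_def inv_letter_def)

definition eval_letter :: "('g, 'c) monoid_scheme \<Rightarrow> ('a \<Rightarrow> 'g) \<Rightarrow> 'a \<times> bool \<Rightarrow> 'g" where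
  "eval_letter G f x = (if snd x then f (fst x) else inv\<^bsub>G\<^esub> (f (fst x)))"

lemma free_eval_Nil [simp]: "free_eval G f [] = \<one>\<^bsub>G\<^esub>"
  by (simp add: free_eval_def)

lemma free_eval_Cons [simp]: "free_eval G f (x # w) = eval_letter G f x \<otimes>\<^bsub>G\<^esub> free_eval G f w"
  by (cases x) (simp add: free_eval_def eval_letter_def)

lemma free_eval_cong:
  "(\<And>a. a \<in> fst ` set w \<Longrightarrow> f a = g a) \<Longrightarrow> free_eval G f w = free_eval G g w"
  by (induction w) (auto simp: eval_letter_def)

context group
begin

lemma eval_letter_closed: "f ` Xs \<subseteq> carrier G \<Longrightarrow> fst x \<in> Xs \<Longrightarrow> eval_letter G f x \<in> carrier G"
  by (auto simp: eval_letter_def)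

lemma free_eval_closed:
  "f ` Xs \<subseteq> carrier G \<Longrightarrow> fst ` set w \<subseteq> Xs \<Longrightarrow> free_eval G f w \<in> carrier G"
  by (induction w) (auto simp: eval_letter_closed)

lemma free_eval_append:
  "f ` Xs \<subseteq> carrier G \<Longrightarrow> fst ` set u \<subseteq> Xs \<Longrightarrow> fst ` set v \<subseteq> Xs \<Longrightarrow>
   free_eval G f (u @ v) = free_eval G f u \<otimes> free_eval G f v"
  by (induction u) (auto simp: eval_letter_closed free_eval_closed m_assoc)

lemma free_eval_free_step:
  assumes f: "f ` Xs \<subseteq> carrier G" and x: "fst x \<in> Xs" and w: "fst ` set w \<subseteq> Xs"
  shows "free_eval G f (free_step x w) = free_eval G f (x # w)"
proof (cases w)
  case (Cons y ys)
  have ys: "free_eval G f ys \<in> carrier G" using w Cons by (auto intro: free_eval_closed[OF f])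
  have "eval_letter G f x \<otimes> eval_letter G f (inv_letter x) = \<one>"
    using f x by (auto simp: eval_letter_def inv_letter_def)
  then have "eval_letter G f x \<otimes> (eval_letter G f (inv_letter x) \<otimes> free_eval G f ys)
      = free_eval G f ys"
    using f x ys by (simp add: eval_letter_closed flip: m_assoc)
  with Cons show ?thesis by (auto simp: free_step_Cons)
qed simp

lemma free_eval_free_reduce:
  assumes f: "f ` Xs \<subseteq> carrier G" and w: "fst ` set w \<subseteq> Xs"
  shows "free_eval G f (free_reduce w) = free_eval G f w"
proof -
  have "free_eval G f (foldr free_step u []) = free_eval G f u" if "fst ` set u \<subseteq> Xs" for u
    using that
  proof (induction u)
    case (Cons x u)
    have "fst ` set (foldr free_step u []) \<subseteq> Xs"
      using letters_foldr_free_step[of u "[]"] Cons.prems by auto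
    with Cons show ?case by (simp add: free_eval_free_step[OF f])
  qed simp
  with w show ?thesis by (simp add: free_reduce_def)
qed

lemma free_eval_hom:
  assumes f: "f ` Xs \<subseteq> carrier G"
  shows "free_eval G f \<in> hom (free_group Xs) G"
proof (rule homI)
  fix u v assume "u \<in> carrier (free_group Xs)" "v \<in> carrier (free_group Xs)"
  then have "fst ` set u \<subseteq> Xs" "fst ` set v \<subseteq> Xs" by (auto simp: carrier_free_group)
  moreover from this have "fst ` set (u @ v) \<subseteq> Xs" by auto
  ultimately show "free_eval G f (u \<otimes>\<^bsub>free_group Xs\<^esub> v) = free_eval G f u \<otimes> free_eval G f v"
    by (simp add: mult_free_group free_eval_free_reduce[OF f] free_eval_append[OF f])
qed (simp add: carrier_free_group free_eval_closed[OF f])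

end

lemma (in group_hom) hom_free_eval:
  "f ` Xs \<subseteq> carrier G \<Longrightarrow> fst ` set w \<subseteq> Xs \<Longrightarrow> h (free_eval G f w) = free_eval H (h \<circ> f) w"
  by (induction w) (auto simp: eval_letter_def image_subset_iff G.free_eval_closed)

lemma free_eval_free_gen:
  "w \<in> carrier (free_group Xs) \<Longrightarrow> free_eval (free_group Xs) free_gen w = w"
proof (induction w)
  case (Cons x w)
  then have "reduced (x # w)" "fst x \<in> Xs" "w \<in> carrier (free_group Xs)"
    by (auto simp: carrier_free_group dest: reduced_ConsD)
  moreover have "eval_letter (free_group Xs) free_gen x = [x]" if "fst x \<in> Xs"
    using that inv_free_gen[of "fst x" Xs] by (cases x) (auto simp: eval_letter_def free_gen_def)
  ultimately show ?case
    using Cons.IH by (simp add: mult_free_group free_reduce_append free_reduce_reduced free_step_reduced)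
qed (simp add: one_free_group)

section \<open>Word length under a projection onto a free group\<close>

definition has_word_of_length :: "('g, 'c) monoid_scheme \<Rightarrow> 'g set \<Rightarrow> 'g \<Rightarrow> nat \<Rightarrow> bool" where
  "has_word_of_length G S g n \<longleftrightarrow> (\<exists>ws. length ws = n \<and> set ws \<subseteq> S \<union> m_inv G ` S \<and>
                                      foldr (\<otimes>\<^bsub>G\<^esub>) ws \<one>\<^bsub>G\<^esub> = g)"

lemma word_length_le: "has_word_of_length G S g n \<Longrightarrow> word_length G S g \<le> n"
  unfolding word_length_def has_word_of_length_def by (rule Least_le)

lemma has_word_of_length_word_length:
  "has_word_of_length G S g n \<Longrightarrow> has_word_of_length G S g (word_length G S g)"
  unfolding word_length_def has_word_of_length_def by (rule LeastI)

lemma (in group) foldr_mult_closed: "set ws \<subseteq> carrier G \<Longrightarrow> foldr (\<otimes>) ws \<one> \<in> carrier G"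
  by (induction ws) auto

lemma (in group) generate_imp_has_word_of_length:
  assumes S: "S \<subseteq> carrier G" and g: "g \<in> generate G S"
  shows "\<exists>n. has_word_of_length G S g n"
  using g
proof (induction rule: generate.induct)
  case one
  show ?case unfolding has_word_of_length_def by (intro exI[of _ 0]) simp
next
  case (incl h)
  then show ?case unfolding has_word_of_length_def using S by (intro exI[of _ 1] exI[of _ "[h]"]) auto
next
  case (inv h)
  then show ?case unfolding has_word_of_length_def using S by (intro exI[of _ 1] exI[of _ "[inv h]"]) auto
next
  case (eng h1 h2)
  then obtain ws1 ws2 where ws:
    "set ws1 \<subseteq> S \<union> m_inv G ` S" "foldr (\<otimes>) ws1 \<one> = h1"
    "set ws2 \<subseteq> S \<union> m_inv G ` S" "foldr (\<otimes>) ws2 \<one> = h2"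
    unfolding has_word_of_length_def by blast
  have "foldr (\<otimes>) ws \<one> \<otimes> g = foldr (\<otimes>) ws g" if "set ws \<subseteq> carrier G" "g \<in> carrier G" for ws g
    using that by (induction ws) (auto simp: m_assoc foldr_mult_closed)
  moreover have "S \<union> m_inv G ` S \<subseteq> carrier G" using S by auto
  ultimately have "foldr (\<otimes>) (ws1 @ ws2) \<one> = h1 \<otimes> h2"
    using ws foldr_mult_closed[of ws2] by (metis foldr_append le_sup_iff subset_trans)
  with ws show ?case
    unfolding has_word_of_length_def by (intro exI[of _ "length (ws1 @ ws2)"] exI[of _ "ws1 @ ws2"]) auto
qed

lemma (in group) has_word_of_length_subgroup:
  assumes "subgroup K G" "R \<subseteq> K" "R \<subseteq> S" "has_word_of_length (G\<lparr>carrier := K\<rparr>) R g n"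
  shows "has_word_of_length G S g n"
proof -
  have "m_inv (G\<lparr>carrier := K\<rparr>) ` R = m_inv G ` R"
    using assms(1,2) m_inv_consistent by (intro image_cong) auto
  then have "m_inv (G\<lparr>carrier := K\<rparr>) ` R \<subseteq> m_inv G ` S" using assms(3) by auto
  with assms(3,4) show ?thesis unfolding has_word_of_length_def by auto blast
qed

locale free_projection = group +
  fixes S :: "'a set" and \<phi> :: "'a \<Rightarrow> ('i \<times> bool) list" and I :: "'i set" and gen :: "'i \<Rightarrow> 'a"
  assumes hom_\<phi>: "\<phi> \<in> hom G (free_group I)"
    and S_closed: "S \<subseteq> carrier G"
    and length_\<phi>_S: "\<And>s. s \<in> S \<Longrightarrow> length (\<phi> s) \<le> 1"
    and gen_in_S: "gen ` I \<subseteq> S"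
    and \<phi>_gen: "\<And>i. i \<in> I \<Longrightarrow> \<phi> (gen i) = free_gen i"
begin

abbreviation F :: "'a set" where "F \<equiv> generate G (gen ` I)"

sublocale \<phi>: group_hom G "free_group I" \<phi>
  using hom_\<phi> group_free_group is_group by (simp add: group_hom_def group_hom_axioms_def)

lemma gen_closed: "gen ` I \<subseteq> carrier G"
  using gen_in_S S_closed by blast

lemma subgroup_F: "subgroup F G"
  by (rule generate_is_subgroup[OF gen_closed])

lemma length_\<phi>_letter:
  assumes "s \<in> S \<union> m_inv G ` S"
  shows "length (\<phi> s) \<le> 1"
  using assms
proof
  assume "s \<in> m_inv G ` S"
  then obtain t where t: "t \<in> S" "s = inv t" by blast
  then have "t \<in> carrier G" using S_closed by blast
  then have "length (\<phi> s) \<le> length (\<phi> t)"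
    using t(2) length_inv_free_group[OF \<phi>.hom_closed] by simp
  with length_\<phi>_S[OF t(1)] show ?thesis by linarith
qed (rule length_\<phi>_S)

lemma length_\<phi>_le_word_length:
  assumes "has_word_of_length G S g n"
  shows "length (\<phi> g) \<le> word_length G S g"
proof -
  obtain ws where ws: "length ws = word_length G S g" "set ws \<subseteq> S \<union> m_inv G ` S"
    "foldr (\<otimes>) ws \<one> = g"
    using has_word_of_length_word_length[OF assms] unfolding has_word_of_length_def by blast
  have "length (\<phi> (foldr (\<otimes>) ws \<one>)) \<le> length ws"
    using ws(2)
  proof (induction ws)
    case Nil
    show ?case by (simp add: one_free_group)
  next
    case (Cons s ws)
    then have s: "s \<in> carrier G" and ws: "foldr (\<otimes>) ws \<one> \<in> carrier G"
      using S_closed by (auto intro!: foldr_mult_closed)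
    have "length (\<phi> (foldr (\<otimes>) (s # ws) \<one>))
        \<le> length (\<phi> s) + length (\<phi> (foldr (\<otimes>) ws \<one>))"
      using length_mult_free_group by (simp add: s ws)
    also have "\<dots> \<le> 1 + length ws"
      using Cons length_\<phi>_letter by (intro add_mono) auto
    finally show ?case by simp
  qed
  with ws show ?thesis by simp
qed

lemma F_eq_free_eval: "k \<in> F \<Longrightarrow> \<exists>w \<in> carrier (free_group I). free_eval G gen w = k"
proof -
  assume "k \<in> F"
  then have "\<exists>w. fst ` set w \<subseteq> I \<and> free_eval G gen w = k"
  proof (induction rule: generate.induct)
    case one
    show ?case by (intro exI[of _ "[]"]) simp
  next
    case (incl h)
    then obtain i where "i \<in> I" "h = gen i" by blast
    moreover from this have "gen i \<in> carrier G" using gen_closed by blast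
    ultimately show ?case by (intro exI[of _ "[(i, True)]"]) (simp add: eval_letter_def)
  next
    case (inv h)
    then obtain i where "i \<in> I" "h = gen i" by blast
    moreover from this have "gen i \<in> carrier G" using gen_closed by blast
    ultimately show ?case by (intro exI[of _ "[(i, False)]"]) (simp add: eval_letter_def)
  next
    case (eng h1 h2)
    then obtain w1 w2 where "fst ` set w1 \<subseteq> I" "free_eval G gen w1 = h1"
      "fst ` set w2 \<subseteq> I" "free_eval G gen w2 = h2" by blast
    then show ?case
      using free_eval_append[OF gen_closed] by (intro exI[of _ "w1 @ w2"]) auto
  qed
  then obtain w where "fst ` set w \<subseteq> I" "free_eval G gen w = k" by blast
  then show ?thesis
    using free_reduce_in_free_group free_eval_free_reduce[OF gen_closed] by blast
qed

lemma \<phi>_free_eval: "w \<in> carrier (free_group I) \<Longrightarrow> \<phi> (free_eval G gen w) = w"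
proof -
  assume w: "w \<in> carrier (free_group I)"
  then have letters: "fst ` set w \<subseteq> I" by (simp add: carrier_free_group)
  have "\<phi> (free_eval G gen w) = free_eval (free_group I) (\<phi> \<circ> gen) w"
    by (rule \<phi>.hom_free_eval[OF gen_closed letters])
  also have "\<dots> = free_eval (free_group I) free_gen w"
    using letters \<phi>_gen by (intro free_eval_cong) (simp add: subset_iff)
  also have "\<dots> = w" by (rule free_eval_free_gen[OF w])
  finally show ?thesis .
qed

lemma has_word_of_length_free_eval:
  assumes w: "w \<in> carrier (free_group I)"
  shows "has_word_of_length (G\<lparr>carrier := F\<rparr>) (gen ` I) (free_eval G gen w) (length w)"
proof -
  have "eval_letter G gen x \<in> gen ` I \<union> m_inv (G\<lparr>carrier := F\<rparr>) ` gen ` I" if "x \<in> set w" for x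
  proof -
    from that w have x: "gen (fst x) \<in> gen ` I" by (auto simp: carrier_free_group)
    then have "inv gen (fst x) = inv\<^bsub>G\<lparr>carrier := F\<rparr>\<^esub> gen (fst x)"
      using m_inv_consistent[OF subgroup_F] generate.incl by metis
    with x show ?thesis unfolding eval_letter_def by auto
  qed
  moreover have "foldr (\<otimes>) (map (eval_letter G gen) w) \<one> = free_eval G gen w"
    by (induction w) auto
  ultimately show ?thesis
    unfolding has_word_of_length_def by (intro exI[of _ "map (eval_letter G gen) w"]) auto
qed

theorem word_length_eq_length_\<phi>:
  assumes k: "k \<in> F"
  shows "word_length G S k = length (\<phi> k)"
    and "word_length (G\<lparr>carrier := F\<rparr>) (gen ` I) k = length (\<phi> k)"
proof -
  obtain w where w: "w \<in> carrier (free_group I)" and k_eq: "free_eval G gen w = k"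
    using F_eq_free_eval[OF k] by blast
  have \<phi>_k: "\<phi> k = w" using \<phi>_free_eval[OF w] unfolding k_eq .
  have word: "has_word_of_length (G\<lparr>carrier := F\<rparr>) (gen ` I) k (length (\<phi> k))"
    using has_word_of_length_free_eval[OF w] unfolding k_eq \<phi>_k .
  then have sub_le: "word_length (G\<lparr>carrier := F\<rparr>) (gen ` I) k \<le> length (\<phi> k)"
    by (rule word_length_le)
  have "gen ` I \<subseteq> F" by (rule subsetI, rule generate.incl)
  then have word_S: "has_word_of_length G S k (word_length (G\<lparr>carrier := F\<rparr>) (gen ` I) k)"
    by (rule has_word_of_length_subgroup[OF subgroup_F _ gen_in_S has_word_of_length_word_length[OF word]])
  have "length (\<phi> k) \<le> word_length G S k"
    by (rule length_\<phi>_le_word_length[OF word_S])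
  moreover have "word_length G S k \<le> word_length (G\<lparr>carrier := F\<rparr>) (gen ` I) k"
    by (rule word_length_le[OF word_S])
  ultimately show "word_length G S k = length (\<phi> k)"
    and "word_length (G\<lparr>carrier := F\<rparr>) (gen ` I) k = length (\<phi> k)"
    using sub_le by linarith+
qed

corollary cayley_dist_eq:
  assumes g: "g \<in> F" and g': "g' \<in> F"
  shows "cayley_dist G S g g' = cayley_dist (G\<lparr>carrier := F\<rparr>) (gen ` I) g g'"
proof -
  have k: "inv g \<otimes> g' \<in> F"
    by (rule subgroup.m_closed[OF subgroup_F subgroup.m_inv_closed[OF subgroup_F g] g'])
  have "inv\<^bsub>G\<lparr>carrier := F\<rparr>\<^esub> g = inv g"
    by (rule m_inv_consistent[OF subgroup_F g])
  then have "cayley_dist (G\<lparr>carrier := F\<rparr>) (gen ` I) g g'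
      = word_length (G\<lparr>carrier := F\<rparr>) (gen ` I) (inv g \<otimes> g')"
    unfolding cayley_dist_def by simp
  also have "\<dots> = word_length G S (inv g \<otimes> g')"
    by (simp only: word_length_eq_length_\<phi>[OF k])
  finally show ?thesis unfolding cayley_dist_def ..
qed

corollary word_length_mult_kernel:
  assumes g: "g \<in> F" and u: "u \<in> generate G S" "\<phi> u = []"
  shows "word_length G S g \<le> word_length G S (g \<otimes> u)"
  \<comment> \<open>Outside \<open>generate G S\<close> the word length is the junk value 0, hence the hypothesis on \<open>u\<close>.\<close>
proof -
  have "g \<in> generate G S" using g mono_generate[OF gen_in_S] by (rule subsetD[rotated])
  then have "g \<otimes> u \<in> generate G S" using u(1) by (rule generate.eng)
  then obtain n where n: "has_word_of_length G S (g \<otimes> u) n"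
    using generate_imp_has_word_of_length[OF S_closed] by blast
  have "g \<in> carrier G" by (rule subgroup.mem_carrier[OF subgroup_F g])
  moreover have "u \<in> carrier G" by (rule generate_in_carrier[OF S_closed u(1)])
  ultimately have "\<phi> (g \<otimes> u) = \<phi> g \<otimes>\<^bsub>free_group I\<^esub> \<one>\<^bsub>free_group I\<^esub>"
    using u(2) by (simp add: one_free_group)
  also have "\<dots> = \<phi> g" using \<open>g \<in> carrier G\<close> by simp
  finally have "length (\<phi> g) \<le> word_length G S (g \<otimes> u)"
    using length_\<phi>_le_word_length[OF n] by simp
  then show ?thesis using word_length_eq_length_\<phi>(1)[OF g] by simp
qed

end

section \<open>Amalgamated free products\<close>

locale amalgam_data =
  fixes A :: "('a, 'c) monoid_scheme" and B :: "('b, 'd) monoid_scheme"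
    and phi :: "'i \<Rightarrow> 'a" and psi :: "'i \<Rightarrow> 'b" and I :: "'i set"
  assumes group_A: "group A" and group_B: "group B"
    and phi_closed: "phi ` I \<subseteq> carrier A" and psi_closed: "psi ` I \<subseteq> carrier B"
begin

abbreviation FA where "FA \<equiv> amalg_free A B"
abbreviation N where "N \<equiv> amalg_N A B phi psi I"
abbreviation AM where "AM \<equiv> amalgam A B phi psi I"

sublocale A: group A by (rule group_A)
sublocale B: group B by (rule group_B)
sublocale FA: group FA unfolding amalg_free_def by (rule group_free_group)

lemma relators_closed: "amalg_rels A B phi psi I \<subseteq> carrier FA"
  unfolding amalg_rels_def amalg_free_def using phi_closed psi_closed
  by (auto simp: image_subset_iff intro!: free_reduce_in_free_group)

lemma normal_N: "N \<lhd> FA"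
  unfolding amalg_N_def normal_closure_def
proof (rule FA.normal_generateI)
  show "(\<Union>g\<in>carrier FA. (\<lambda>r. g \<otimes>\<^bsub>FA\<^esub> r \<otimes>\<^bsub>FA\<^esub> inv\<^bsub>FA\<^esub> g) ` amalg_rels A B phi psi I)
      \<subseteq> carrier FA"
    using relators_closed by auto
next
  fix h g
  assume "h \<in> (\<Union>g\<in>carrier FA. (\<lambda>r. g \<otimes>\<^bsub>FA\<^esub> r \<otimes>\<^bsub>FA\<^esub> inv\<^bsub>FA\<^esub> g) ` amalg_rels A B phi psi I)"
    and g: "g \<in> carrier FA"
  then obtain g' r where g': "g' \<in> carrier FA" and r: "r \<in> amalg_rels A B phi psi I"
    and h: "h = g' \<otimes>\<^bsub>FA\<^esub> r \<otimes>\<^bsub>FA\<^esub> inv\<^bsub>FA\<^esub> g'"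
    by blast
  have "g \<otimes>\<^bsub>FA\<^esub> h \<otimes>\<^bsub>FA\<^esub> inv\<^bsub>FA\<^esub> g
      = (g \<otimes>\<^bsub>FA\<^esub> g') \<otimes>\<^bsub>FA\<^esub> r \<otimes>\<^bsub>FA\<^esub> inv\<^bsub>FA\<^esub> (g \<otimes>\<^bsub>FA\<^esub> g')"
    using g g' r relators_closed by (auto simp: h FA.m_assoc FA.inv_mult_group)
  then show "g \<otimes>\<^bsub>FA\<^esub> h \<otimes>\<^bsub>FA\<^esub> inv\<^bsub>FA\<^esub> g
      \<in> (\<Union>g\<in>carrier FA. (\<lambda>r. g \<otimes>\<^bsub>FA\<^esub> r \<otimes>\<^bsub>FA\<^esub> inv\<^bsub>FA\<^esub> g) ` amalg_rels A B phi psi I)"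
    using g g' r by auto
qed

sublocale N: normal N FA by (rule normal_N)

lemma group_AM: "group AM"
  unfolding amalgam_def by (rule N.factorgroup_is_group)

lemma relator_in_N: "r \<in> amalg_rels A B phi psi I \<Longrightarrow> r \<in> N"
  unfolding amalg_N_def normal_closure_def
  by (rule generate.incl) (use relators_closed in force)

lemma amalg_inl_hom: "amalg_inl A B phi psi I \<in> hom A AM"
proof -
  interpret AM: group AM by (rule group_AM)
  let ?q = "\<lambda>w. N #>\<^bsub>FA\<^esub> w"
  interpret q: group_hom FA AM ?q
    using N.r_coset_hom_Mod group_AM FA.is_group
    by (simp add: group_hom_def group_hom_axioms_def amalgam_def)
  have gen: "free_gen (Inl a) \<in> carrier FA" if "a \<in> carrier A" for a
    unfolding amalg_free_def using that by (intro free_gen_in_free_group) auto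
  show ?thesis
  proof (rule homI)
    fix a assume "a \<in> carrier A"
    then show "amalg_inl A B phi psi I a \<in> carrier AM"
      unfolding amalg_inl_def using gen by simp
  next
    fix a a' assume a: "a \<in> carrier A" and a': "a' \<in> carrier A"
    define u v w :: "(('a + 'b) \<times> bool) list" where "u = free_gen (Inl a)" and "v = free_gen (Inl a')"
      and "w = free_gen (Inl (a \<otimes>\<^bsub>A\<^esub> a'))"
    have uvw: "u \<in> carrier FA" "v \<in> carrier FA" "w \<in> carrier FA"
      using a a' gen unfolding u_def v_def w_def by auto
    have "u \<otimes>\<^bsub>FA\<^esub> (v \<otimes>\<^bsub>FA\<^esub> inv\<^bsub>FA\<^esub> w)
        = free_reduce [(Inl a, True), (Inl a', True), (Inl (a \<otimes>\<^bsub>A\<^esub> a'), False)]"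
      using a a' unfolding u_def v_def w_def amalg_free_def
      by (simp add: inv_free_gen InlI mult_free_group) (simp add: free_gen_def)
    also have "\<dots> \<in> N"
      using a a' by (intro relator_in_N) (auto simp: amalg_rels_def)
    finally have "?q (u \<otimes>\<^bsub>FA\<^esub> (v \<otimes>\<^bsub>FA\<^esub> inv\<^bsub>FA\<^esub> w)) = \<one>\<^bsub>AM\<^esub>"
      unfolding amalgam_def using N.rcos_const[OF FA.is_group] by simp
    then have "?q u \<otimes>\<^bsub>AM\<^esub> (?q v \<otimes>\<^bsub>AM\<^esub> inv\<^bsub>AM\<^esub> ?q w) = \<one>\<^bsub>AM\<^esub>"
      using uvw by simp
    then have "inv\<^bsub>AM\<^esub> (inv\<^bsub>AM\<^esub> ?q w) = ?q u \<otimes>\<^bsub>AM\<^esub> ?q v"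
      using uvw by (intro AM.inv_equality) (simp_all add: AM.m_assoc)
    then have "?q u \<otimes>\<^bsub>AM\<^esub> ?q v = ?q w"
      using uvw by simp
    then show "amalg_inl A B phi psi I (a \<otimes>\<^bsub>A\<^esub> a')
        = amalg_inl A B phi psi I a \<otimes>\<^bsub>AM\<^esub> amalg_inl A B phi psi I a'"
      unfolding amalg_inl_def u_def v_def w_def by simp
  qed
qed

theorem amalgam_universal:
  fixes K :: "('k, 'e) monoid_scheme"
  assumes K: "group K" and al: "al \<in> hom A K" and be: "be \<in> hom B K"
    and compat: "\<And>i. i \<in> I \<Longrightarrow> al (phi i) = be (psi i)"
  obtains f where "f \<in> hom AM K"
    and "\<And>a. a \<in> carrier A \<Longrightarrow> f (amalg_inl A B phi psi I a) = al a"
    and "\<And>b. b \<in> carrier B \<Longrightarrow> f (amalg_inr A B phi psi I b) = be b"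
proof -
  interpret K: group K by (rule K)
  interpret al: group_hom A K al using al by unfold_locales
  interpret be: group_hom B K be using be by unfold_locales
  let ?c = "case_sum al be"
  have c: "?c ` (carrier A <+> carrier B) \<subseteq> carrier K"
    using al be by (auto simp: hom_def)
  interpret lift: group_hom FA K "free_eval K ?c"
    using K.free_eval_hom[OF c] FA.is_group K
    by (simp add: group_hom_def group_hom_axioms_def amalg_free_def)
  have lift_relator: "free_eval K ?c r = \<one>\<^bsub>K\<^esub>" if r: "r \<in> amalg_rels A B phi psi I" for r
  proof -
    obtain L where L: "r = free_reduce L" "fst ` set L \<subseteq> carrier A <+> carrier B"
      and "free_eval K ?c L = \<one>\<^bsub>K\<^esub>"
      using r unfolding amalg_rels_def
    proof (elim UnE CollectE exE conjE)
      fix a a' assume "a \<in> carrier A" "a' \<in> carrier A"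
        "r = free_reduce [(Inl a, True), (Inl a', True), (Inl (a \<otimes>\<^bsub>A\<^esub> a'), False)]"
      then show thesis
        by (intro that[of "[(Inl a, True), (Inl a', True), (Inl (a \<otimes>\<^bsub>A\<^esub> a'), False)]"])
          (auto simp: eval_letter_def K.m_assoc[symmetric])
    next
      fix b b' assume "b \<in> carrier B" "b' \<in> carrier B"
        "r = free_reduce [(Inr b, True), (Inr b', True), (Inr (b \<otimes>\<^bsub>B\<^esub> b'), False)]"
      then show thesis
        by (intro that[of "[(Inr b, True), (Inr b', True), (Inr (b \<otimes>\<^bsub>B\<^esub> b'), False)]"])
          (auto simp: eval_letter_def K.m_assoc[symmetric])
    next
      fix i assume "i \<in> I" "r = free_reduce [(Inl (phi i), True), (Inr (psi i), False)]"
      with phi_closed psi_closed compat show thesis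
        by (intro that[of "[(Inl (phi i), True), (Inr (psi i), False)]"])
          (auto simp: eval_letter_def)
    qed
    with K.free_eval_free_reduce[OF c] show ?thesis by simp
  qed
  have "N \<subseteq> kernel FA K (free_eval K ?c)"
    unfolding amalg_N_def normal_closure_def
  proof (rule FA.generate_subgroup_incl[OF _ lift.subgroup_kernel])
    show "(\<Union>g\<in>carrier FA. (\<lambda>r. g \<otimes>\<^bsub>FA\<^esub> r \<otimes>\<^bsub>FA\<^esub> inv\<^bsub>FA\<^esub> g) ` amalg_rels A B phi psi I)
        \<subseteq> kernel FA K (free_eval K ?c)"
      using relators_closed lift_relator by (auto simp: kernel_def)
  qed
  then obtain f where f: "f \<in> hom AM K"
    and f_coset: "\<And>w. w \<in> carrier FA \<Longrightarrow> f (N #>\<^bsub>FA\<^esub> w) = free_eval K ?c w"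
    using lift.FactGroup_universal_kernel[OF normal_N] unfolding amalgam_def by blast
  have gen: "free_gen c \<in> carrier FA" if "c \<in> carrier A <+> carrier B" for c
    unfolding amalg_free_def using that by (rule free_gen_in_free_group)
  show thesis
  proof (rule that[OF f])
    fix a assume "a \<in> carrier A"
    then show "f (amalg_inl A B phi psi I a) = al a"
      unfolding amalg_inl_def by (simp add: f_coset gen InlI) (simp add: free_gen_def eval_letter_def)
  next
    fix b assume "b \<in> carrier B"
    then show "f (amalg_inr A B phi psi I b) = be b"
      unfolding amalg_inr_def by (simp add: f_coset gen InrI) (simp add: free_gen_def eval_letter_def)
  qed
qed

end

section \<open>The group \<open>G_1\<close>\<close>

abbreviation xy_inv :: "nat \<Rightarrow> nat \<Rightarrow> fw \<times> fw \<times> fw" where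
  "xy_inv p i \<equiv> xP i \<otimes>\<^bsub>Pxyz p\<^esub> inv\<^bsub>Pxyz p\<^esub> yP i"

lemma group_Pxyz: "group (Pxyz p)"
  unfolding Pxyz_def by (intro DirProd_group group_free_group)

lemma xP_closed: "i < p \<Longrightarrow> xP i \<in> carrier (Pxyz p)"
  and yP_closed: "i < p \<Longrightarrow> yP i \<in> carrier (Pxyz p)"
  and zP_closed: "i < p \<Longrightarrow> zP i \<in> carrier (Pxyz p)"
  by (auto simp: Pxyz_def xP_def yP_def zP_def carrier_free_group free_gen_def)

lemma xy_inv_closed: "i < p \<Longrightarrow> xy_inv p i \<in> carrier (Pxyz p)"
  by (simp add: xP_closed yP_closed group.inv_closed[OF group_Pxyz]
      monoid.m_closed[OF group.is_monoid[OF group_Pxyz]])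

lemma group_hom_z_component: "group_hom (Pxyz p) (free_group {..<p}) (\<lambda>q. snd (snd q))"
  using group_Pxyz group_free_group
  by (auto simp: group_hom_def group_hom_axioms_def Pxyz_def mult_DirProd' intro!: homI)

lemma z_component_xy_inv:
  assumes "i < p"
  shows "snd (snd (xy_inv p i)) = []"
proof -
  interpret z_component: group_hom "Pxyz p" "free_group {..<p}" "\<lambda>q. snd (snd q)"
    by (rule group_hom_z_component)
  have "snd (snd (xP i)) = \<one>\<^bsub>free_group {..<p}\<^esub>" "snd (snd (yP i)) = \<one>\<^bsub>free_group {..<p}\<^esub>"
    by (simp_all add: xP_def yP_def one_free_group)
  with assms xP_closed yP_closed have "snd (snd (xy_inv p i)) = \<one>\<^bsub>free_group {..<p}\<^esub>"
    by simp
  then show ?thesis by (simp add: one_free_group)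
qed

locale G1_data =
  fixes H :: "('h, 'c) monoid_scheme" and T :: "'h set" and p :: nat and d :: "nat \<Rightarrow> 'h"
  assumes presented: "finitely_presented_by H T" and d_in_T: "d ` {..<p} \<subseteq> T"
begin

abbreviation G where "G \<equiv> G1 H p d"
abbreviation S where "S \<equiv> S1 H T p d"

lemma group_H: "group H" and T_closed: "T \<subseteq> carrier H" and generate_T: "generate H T = carrier H"
  using presented by (simp_all add: finitely_presented_by_def)

sublocale am: amalgam_data H "Pxyz p" d "xy_inv p" "{..<p}"
  by (rule amalgam_data.intro[OF group_H group_Pxyz]) (use d_in_T T_closed xy_inv_closed in auto)

lemma G1_eq: "G = am.AM \<times>\<times> integer_group"
  by (simp add: G1_def Amal1_def)

lemma group_G1: "group G"
  unfolding G1_eq by (intro DirProd_group am.group_AM group_integer_group)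

sublocale G1: group G by (rule group_G1)

lemma embH_hom: "embH H p d \<in> hom H G"
  unfolding G1_eq embH_def hom_paired
  using am.amalg_inl_hom by (auto intro: homI)

lemma embP_closed: "q \<in> carrier (Pxyz p) \<Longrightarrow> embP H p d q \<in> carrier G"
  unfolding embP_def G1_eq amalg_inr_def amalgam_def amalg_free_def
  by (auto simp: carrier_FactGroup intro!: free_gen_in_free_group)

lemma generators_closed:
  assumes "i < p"
  shows "gx H p d i \<in> carrier G" "gy H p d i \<in> carrier G" "gz H p d i \<in> carrier G"
    "ga H p d i \<in> carrier G" "gb H p d i \<in> carrier G"
  using assms unfolding ga_def gb_def gx_def gy_def gz_def
  by (auto intro: embP_closed xP_closed yP_closed zP_closed)

lemma gs1_closed: "gs1 H p d \<in> carrier G"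
  unfolding gs1_def G1_eq Amal1_def using group.is_monoid[OF am.group_AM] by simp

lemma S1_closed: "S \<subseteq> carrier G"
proof -
  have "embH H p d ` T \<subseteq> carrier G" using hom_carrier[OF embH_hom] T_closed by blast
  then show ?thesis
    using generators_closed gs1_closed unfolding S1_def Rxz_def Ryz_def by auto
qed

lemma embH_in_generate_S1:
  assumes "h \<in> carrier H"
  shows "embH H p d h \<in> generate G S"
proof -
  interpret embH: group_hom H G "embH H p d"
    using embH_hom group_H group_G1 by (simp add: group_hom_def group_hom_axioms_def)
  have "embH H p d h \<in> generate G (embH H p d ` T)"
    using assms embH.generate_img[OF T_closed] generate_T by simp
  also have "\<dots> \<subseteq> generate G S"
    by (rule G1.mono_generate) (auto simp: S1_def)
  finally show ?thesis .
qed

lemma z_projection: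
  obtains \<phi> where "\<phi> \<in> hom G (free_group {..<p})"
    and "\<And>h. h \<in> carrier H \<Longrightarrow> \<phi> (embH H p d h) = []"
    and "\<And>q. q \<in> carrier (Pxyz p) \<Longrightarrow> \<phi> (embP H p d q) = snd (snd q)"
    and "\<phi> (gs1 H p d) = []"
proof -
  have trivial: "(\<lambda>_. []) \<in> hom H (free_group {..<p})"
    by (rule homI) (auto simp: carrier_free_group mult_free_group free_reduce_def)
  obtain f where f: "f \<in> hom am.AM (free_group {..<p})"
    and f_inl: "\<And>h. h \<in> carrier H \<Longrightarrow> f (amalg_inl H (Pxyz p) d (xy_inv p) {..<p} h) = []"
    and f_inr: "\<And>q. q \<in> carrier (Pxyz p) \<Longrightarrow>
      f (amalg_inr H (Pxyz p) d (xy_inv p) {..<p} q) = snd (snd q)"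
    using am.amalgam_universal[OF group_free_group trivial group_hom.homh[OF group_hom_z_component]]
      z_component_xy_inv by auto
  have "f \<circ> fst \<in> hom G (free_group {..<p})"
    unfolding G1_eq using f by (simp add: hom_of_fst)
  moreover have "f (\<one>\<^bsub>am.AM\<^esub>) = []"
  proof -
    interpret f: group_hom am.AM "free_group {..<p}" f
      using f am.group_AM group_free_group by (simp add: group_hom_def group_hom_axioms_def)
    show ?thesis using f.hom_one by (simp add: one_free_group)
  qed
  ultimately show thesis
    by (intro that[of "f \<circ> fst"]) (simp_all add: embH_def embP_def gs1_def Amal1_def f_inl f_inr)
qed

lemma free_projections:
  obtains \<phi> where "free_projection G S \<phi> {..<p} (ga H p d)"
    and "free_projection G S \<phi> {..<p} (gb H p d)"
    and "\<And>h. h \<in> carrier H \<Longrightarrow> \<phi> (embH H p d h) = []"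
proof -
  obtain \<phi> where hom: "\<phi> \<in> hom G (free_group {..<p})"
    and \<phi>_embH: "\<And>h. h \<in> carrier H \<Longrightarrow> \<phi> (embH H p d h) = []"
    and \<phi>_embP: "\<And>q. q \<in> carrier (Pxyz p) \<Longrightarrow> \<phi> (embP H p d q) = snd (snd q)"
    and \<phi>_gs1: "\<phi> (gs1 H p d) = []"
    using z_projection by blast
  interpret \<phi>: group_hom G "free_group {..<p}" \<phi>
    using hom group_free_group group_G1 by (simp add: group_hom_def group_hom_axioms_def)
  have xyz: "\<phi> (gx H p d i) = []" "\<phi> (gy H p d i) = []" "\<phi> (gz H p d i) = free_gen i"
    if "i < p" for i
    using that by (simp_all add: gx_def gy_def gz_def \<phi>_embP xP_closed yP_closed zP_closed)
      (simp_all add: xP_def yP_def zP_def)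
  have ab: "\<phi> (ga H p d i) = free_gen i" "\<phi> (gb H p d i) = free_gen i" if "i < p" for i
    using that generators_closed[OF that]
    by (simp_all add: ga_def gb_def xyz mult_free_group) (simp_all add: free_gen_def free_reduce_def)
  have "length (\<phi> s) \<le> 1" if "s \<in> S" for s
    using that T_closed by (auto simp: S1_def Rxz_def Ryz_def \<phi>_embH \<phi>_gs1 xyz ab free_gen_def)
  then have "free_projection G S \<phi> {..<p} (ga H p d)" "free_projection G S \<phi> {..<p} (gb H p d)"
    using hom S1_closed ab by unfold_locales (auto simp: S1_def Rxz_def Ryz_def)
  then show thesis using \<phi>_embH by (rule that)
qed

end

theorem lemma3p2:
  fixes H :: "('h, 'c) monoid_scheme" and T :: "'h set" and p :: nat and d :: "nat \<Rightarrow> 'h"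
  assumes "finitely_presented_by H T"
    and "d ` {..<p} \<subseteq> T"
    and "free_basis H d {..<p}"
  shows "(\<forall>g\<in>Fxz H p d. \<forall>g'\<in>Fxz H p d.
            cayley_dist (G1 H p d) (S1 H T p d) g g'
              = cayley_dist ((G1 H p d)\<lparr>carrier := Fxz H p d\<rparr>) (Rxz H p d) g g')
       \<and> (\<forall>g\<in>Fyz H p d. \<forall>g'\<in>Fyz H p d.
            cayley_dist (G1 H p d) (S1 H T p d) g g'
              = cayley_dist ((G1 H p d)\<lparr>carrier := Fyz H p d\<rparr>) (Ryz H p d) g g')
       \<and> (\<forall>g0\<in>Fxz H p d. \<forall>h\<in>carrier H.
            word_length (G1 H p d) (S1 H T p d) (g0 \<otimes>\<^bsub>G1 H p d\<^esub> embH H p d h)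
              \<ge> word_length (G1 H p d) (S1 H T p d) g0)
       \<and> (\<forall>g1\<in>Fyz H p d. \<forall>h\<in>carrier H.
            word_length (G1 H p d) (S1 H T p d) (g1 \<otimes>\<^bsub>G1 H p d\<^esub> embH H p d h)
              \<ge> word_length (G1 H p d) (S1 H T p d) g1)"
proof -
  interpret G1_data H T p d using assms(1,2) by unfold_locales
  obtain \<phi> where xz: "free_projection G S \<phi> {..<p} (ga H p d)"
    and yz: "free_projection G S \<phi> {..<p} (gb H p d)"
    and \<phi>_embH: "\<And>h. h \<in> carrier H \<Longrightarrow> \<phi> (embH H p d h) = []"
    using free_projections by blast
  show ?thesis
    unfolding Fxz_def Fyz_def Rxz_def Ryz_def
    using free_projection.cayley_dist_eq[OF xz] free_projection.cayley_dist_eq[OF yz]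
      free_projection.word_length_mult_kernel[OF xz _ embH_in_generate_S1 \<phi>_embH]
      free_projection.word_length_mult_kernel[OF yz _ embH_in_generate_S1 \<phi>_embH]
    by blast
qed

end
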